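(* Let $a,b,c,d$ be independent random integers, each uniformly distributed on $\{0,1,\ldots,999\}$, and let $e=a+b+c+d$. Write $a=100a_1+10a_2+a_3$ with digits $a_1,a_2,a_3\in\{0,\ldots,9\}$, and $e=1000e_0+100e_1+10e_2+e_3$ with $e_0\in\{0,1,2,3\}$ and $e_1,e_2,e_3\in\{0,\ldots,9\}$. For $i\in\{1,2,3\}$ define the carry $$c_{i-1}=\left\lfloor \frac{(a \bmod 10^{4-i})+(b \bmod 10^{4-i})+(c \bmod 10^{4-i})+(d \bmod 10^{4-i})}{10^{4-i}}\right\rfloor\in\{0,1,2,3\}.$$ Then $I(a_1;e_0)>0$, and $I(a_i;e_j)=0$ for all $i\in\{1,2,3\}$ and $j\in\{1,2,3\}$. Moreover, $I(a_i;e_i\mid c_{i-1})>0$ for $i=1,2,3$.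
   Context: $I(X;Y)$ denotes the mutual information and $I(X;Y\mid Z)$ the conditional mutual information of discrete random variables. Digits are indexed so that smaller subscripts correspond to higher place values ($a_1$ is the hundreds digit of $a$, $e_0$ the thousands digit of $e$). The quantity $c_{i-1}$ is the carry propagated from digit place $i$ into the next higher place $i-1$ when adding $a,b,c,d$ column by column (including carries from lower places); it is not a digit of the operand $c$. *)

theory Defs
  imports "HOL-Probability.Probability"
begin

definition dprob :: "'w pmf \<Rightarrow> ('w \<Rightarrow> bool) \<Rightarrow> real" where
  "dprob p P = measure_pmf.prob p {w. P w}"

definition mutual_info :: "'w pmf \<Rightarrow> ('w \<Rightarrow> 'a) \<Rightarrow> ('w \<Rightarrow> 'b) \<Rightarrow> real" where
  "mutual_info p X Y =
     (\<Sum>x\<in>X ` set_pmf p. \<Sum>y\<in>Y ` set_pmf p.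
        let pxy = dprob p (\<lambda>w. X w = x \<and> Y w = y);
            px = dprob p (\<lambda>w. X w = x);
            py = dprob p (\<lambda>w. Y w = y)
        in if pxy = 0 then 0 else pxy * log 2 (pxy / (px * py)))"

definition cond_mutual_info ::
  "'w pmf \<Rightarrow> ('w \<Rightarrow> 'a) \<Rightarrow> ('w \<Rightarrow> 'b) \<Rightarrow> ('w \<Rightarrow> 'c) \<Rightarrow> real" where
  "cond_mutual_info p X Y Z =
     (\<Sum>x\<in>X ` set_pmf p. \<Sum>y\<in>Y ` set_pmf p. \<Sum>z\<in>Z ` set_pmf p.
        let pxyz = dprob p (\<lambda>w. X w = x \<and> Y w = y \<and> Z w = z);
            pxz = dprob p (\<lambda>w. X w = x \<and> Z w = z);
            pyz = dprob p (\<lambda>w. Y w = y \<and> Z w = z);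
            pz = dprob p (\<lambda>w. Z w = z)
        in if pxyz = 0 then 0 else pxyz * log 2 (pz * pxyz / (pxz * pyz)))"

definition abcd :: "(nat \<times> nat \<times> nat \<times> nat) pmf" where
  "abcd = pmf_of_set ({0..<1000} \<times> {0..<1000} \<times> {0..<1000} \<times> {0..<1000})"

definition var_a :: "nat \<times> nat \<times> nat \<times> nat \<Rightarrow> nat" where
  "var_a w = (case w of (a,b,c,d) \<Rightarrow> a)"

definition var_e :: "nat \<times> nat \<times> nat \<times> nat \<Rightarrow> nat" where
  "var_e w = (case w of (a,b,c,d) \<Rightarrow> a + b + c + d)"

definition digit_a :: "nat \<Rightarrow> nat \<times> nat \<times> nat \<times> nat \<Rightarrow> nat" where
  "digit_a i w = (var_a w div 10 ^ (3 - i)) mod 10"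

definition digit_e :: "nat \<Rightarrow> nat \<times> nat \<times> nat \<times> nat \<Rightarrow> nat" where
  "digit_e j w = (if j = 0 then var_e w div 1000 else (var_e w div 10 ^ (3 - j)) mod 10)"

text \<open>carry i w = c_{i-1}, the carry from place i into place i-1 (i = 1,2,3).\<close>
definition carry :: "nat \<Rightarrow> nat \<times> nat \<times> nat \<times> nat \<Rightarrow> nat" where
  "carry i w = (case w of (a,b,c,d) \<Rightarrow>
     (a mod 10 ^ (4 - i) + b mod 10 ^ (4 - i) + c mod 10 ^ (4 - i) + d mod 10 ^ (4 - i))
       div 10 ^ (4 - i))"

end

(* Modulo 1000 the sum is e = a + (b + c + d) with b uniform and independent of (a, c, d),
   so e mod 1000 is uniform and independent of a; the digits e_1, e_2, e_3 are functions of
   e mod 1000 and hence independent of every digit of a.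
   For the top digit, e_0 = 3 means e >= 3000. Adding 900 to a maps the outcomes with a_1 = 0
   bijectively onto those with a_1 = 9 and only increases e, while (900, 999, 999, 999) is not
   the image of an outcome with e_0 = 3; so P(a_1 = 0, e_0 = 3) < P(a_1 = 9, e_0 = 3) although
   P(a_1 = 0) = P(a_1 = 9).
   When no carry leaves place i (c_{i-1} = 0) the digit e_i is at least a_i, so the event
   a_i = 9, e_i = 0, c_{i-1} = 0 is impossible although a_i = 9, c_{i-1} = 0 and
   e_i = 0, c_{i-1} = 0 both occur.
   In both positive cases Gibbs' inequality turns the dependence into positive (conditional)
   mutual information. *)

theory Submission
  imports Defs
begin

lemma dprob_nonneg: "0 \<le> dprob p P"
  by (simp add: dprob_def)

lemma dprob_True: "dprob p (\<lambda>_. True) = 1"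
  by (simp add: dprob_def)

lemma dprob_eq_0_iff: "dprob p P = 0 \<longleftrightarrow> (\<forall>w\<in>set_pmf p. \<not> P w)"
  by (auto simp: dprob_def measure_pmf_zero_iff)

lemma dprob_pos_iff: "0 < dprob p P \<longleftrightarrow> (\<exists>w\<in>set_pmf p. P w)"
proof -
  have "0 < dprob p P \<longleftrightarrow> dprob p P \<noteq> 0"
    using dprob_nonneg[of p P] by linarith
  then show ?thesis
    by (simp add: dprob_eq_0_iff)
qed

lemma dprob_mono: "(\<And>w. P w \<Longrightarrow> Q w) \<Longrightarrow> dprob p P \<le> dprob p Q"
  unfolding dprob_def by (rule measure_pmf.finite_measure_mono) auto

lemma dprob_eq_pmf_map: "dprob p (\<lambda>w. X w = x) = pmf (map_pmf X p) x"
  by (simp add: dprob_def pmf_map vimage_def)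

lemma dprob_pmf_of_set:
  assumes "finite S" "S \<noteq> {}"
  shows "dprob (pmf_of_set S) P = card {w \<in> S. P w} / card S"
  using assms by (simp add: dprob_def measure_pmf_of_set Int_def conj_commute)

lemma sum_dprob_partition:
  assumes "finite (X ` set_pmf p)"
  shows "(\<Sum>x\<in>X ` set_pmf p. dprob p (\<lambda>w. X w = x \<and> Q w)) = dprob p Q"
proof -
  let ?A = "\<lambda>x. {w. X w = x \<and> Q w}"
  have "(\<Sum>x\<in>X ` set_pmf p. dprob p (\<lambda>w. X w = x \<and> Q w))
      = measure_pmf.prob p (\<Union>(?A ` X ` set_pmf p))"
    unfolding dprob_def
    by (rule measure_pmf.finite_measure_finite_Union[symmetric])
       (auto simp: assms disjoint_family_on_def)
  also have "\<dots> = measure_pmf.prob p (\<Union>(?A ` X ` set_pmf p) \<inter> set_pmf p)"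
    by (rule measure_Int_set_pmf[symmetric])
  also have "\<Union>(?A ` X ` set_pmf p) \<inter> set_pmf p = {w. Q w} \<inter> set_pmf p"
    by auto
  finally show ?thesis
    by (simp add: dprob_def measure_Int_set_pmf)
qed

lemma mult_log_ratio_ge:
  fixes q r :: real
  assumes "0 \<le> q" "0 \<le> r" "0 < q \<Longrightarrow> 0 < r"
  shows "(q - r) / ln 2 \<le> (if q = 0 then 0 else q * log 2 (q / r))"
    and "q \<noteq> r \<Longrightarrow> (q - r) / ln 2 < (if q = 0 then 0 else q * log 2 (q / r))"
proof -
  have "q - r \<le> (if q = 0 then 0 else q * ln (q / r)) \<and>
      (q \<noteq> r \<longrightarrow> q - r < (if q = 0 then 0 else q * ln (q / r)))"
  proof (cases "q = 0")
    case True
    with assms show ?thesis by auto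
  next
    case False
    with assms have "0 < q" "0 < r" by auto
    then have "q * ln (q / r) = - (q * (ln r - ln q))"
      by (simp add: ln_div algebra_simps)
    moreover have "q * (ln r - ln q) \<le> r - q" "q \<noteq> r \<Longrightarrow> q * (ln r - ln q) < r - q"
      using ln_diff_le[OF \<open>0 < r\<close> \<open>0 < q\<close>] ln_diff_less[OF \<open>0 < r\<close> \<open>0 < q\<close>] \<open>0 < q\<close>
      by (simp_all add: field_simps)
    ultimately show ?thesis using False by auto
  qed
  moreover have "(if q = 0 then 0 else q * log 2 (q / r)) = (if q = 0 then 0 else q * ln (q / r)) / ln 2"
    by (simp add: log_def)
  ultimately show "(q - r) / ln 2 \<le> (if q = 0 then 0 else q * log 2 (q / r))"
    and "q \<noteq> r \<Longrightarrow> (q - r) / ln 2 < (if q = 0 then 0 else q * log 2 (q / r))"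
    by (simp_all add: divide_right_mono divide_strict_right_mono)
qed

lemma gibbs_inequality_strict:
  fixes q r :: "'s \<Rightarrow> real"
  assumes "finite S" "sum q S = 1" "sum r S \<le> 1"
    and "\<And>s. s \<in> S \<Longrightarrow> 0 \<le> q s" "\<And>s. s \<in> S \<Longrightarrow> 0 \<le> r s"
    and "\<And>s. s \<in> S \<Longrightarrow> 0 < q s \<Longrightarrow> 0 < r s"
    and "t \<in> S" "q t \<noteq> r t"
  shows "0 < (\<Sum>s\<in>S. if q s = 0 then 0 else q s * log 2 (q s / r s))"
proof -
  have "0 \<le> (\<Sum>s\<in>S. (q s - r s) / ln 2)"
    using assms(2,3) by (simp add: sum_divide_distrib[symmetric] sum_subtractf)
  also have "\<dots> < (\<Sum>s\<in>S. if q s = 0 then 0 else q s * log 2 (q s / r s))"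
    using assms mult_log_ratio_ge[of "q _" "r _"] by (intro sum_strict_mono_ex1) blast+
  finally show ?thesis .
qed

lemma mutual_info_pos:
  assumes fin: "finite (set_pmf p)"
    and dep: "dprob p (\<lambda>w. X w = x \<and> Y w = y) \<noteq> dprob p (\<lambda>w. X w = x) * dprob p (\<lambda>w. Y w = y)"
  shows "0 < mutual_info p X Y"
proof -
  let ?S = "X ` set_pmf p \<times> Y ` set_pmf p"
  define q where "q s = dprob p (\<lambda>w. X w = fst s \<and> Y w = snd s)" for s
  define r where "r s = dprob p (\<lambda>w. X w = fst s) * dprob p (\<lambda>w. Y w = snd s)" for s
  have "(x, y) \<in> ?S"
  proof (rule ccontr)
    assume "(x, y) \<notin> ?S"
    then have "dprob p (\<lambda>w. X w = x \<and> Y w = y) = 0"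
      and "dprob p (\<lambda>w. X w = x) * dprob p (\<lambda>w. Y w = y) = 0"
      by (auto simp: dprob_eq_0_iff)
    with dep show False by simp
  qed
  have "sum q ?S = 1" "sum r ?S = 1"
    using sum_dprob_partition[of Y p "\<lambda>w. X w = _"] sum_dprob_partition[of X p "\<lambda>_. True"]
      sum_dprob_partition[of Y p "\<lambda>_. True"] fin
    by (simp_all add: q_def r_def sum.cartesian_product' conj_commute dprob_True
        sum_product[symmetric])
  moreover have "0 < r s" if "0 < q s" for s
    using that dprob_mono[of "\<lambda>w. X w = fst s \<and> Y w = snd s" "\<lambda>w. X w = fst s" p]
      dprob_mono[of "\<lambda>w. X w = fst s \<and> Y w = snd s" "\<lambda>w. Y w = snd s" p]
    by (simp add: q_def r_def)
  ultimately have "0 < (\<Sum>s\<in>?S. if q s = 0 then 0 else q s * log 2 (q s / r s))"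
    using fin \<open>(x, y) \<in> ?S\<close> dep
    by (intro gibbs_inequality_strict[where t = "(x, y)"]) (auto simp: q_def r_def dprob_nonneg)
  also have "\<dots> = mutual_info p X Y"
    by (simp add: mutual_info_def Let_def q_def r_def sum.cartesian_product' cong: if_cong)
  finally show ?thesis .
qed

lemma mutual_info_eq_0_if_pair_pmf:
  assumes joint: "map_pmf (\<lambda>w. (X w, Y w)) p = pair_pmf A B"
  shows "mutual_info p X Y = 0"
proof -
  have "map_pmf X p = A" "map_pmf Y p = B"
    using arg_cong[OF joint, of "map_pmf fst"] arg_cong[OF joint, of "map_pmf snd"]
    by (simp_all add: map_pmf_comp map_fst_pair_pmf map_snd_pair_pmf)
  then have "dprob p (\<lambda>w. X w = x \<and> Y w = y) = dprob p (\<lambda>w. X w = x) * dprob p (\<lambda>w. Y w = y)"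
    for x y
    using dprob_eq_pmf_map[of p "\<lambda>w. (X w, Y w)" "(x, y)"]
    by (simp add: joint dprob_eq_pmf_map pmf_pair)
  then show ?thesis
    by (simp add: mutual_info_def Let_def cong: if_cong)
qed

lemma sum_cond_product_dprob:
  assumes fin: "finite (set_pmf p)"
  shows "(\<Sum>c\<in>Z ` set_pmf p. \<Sum>a\<in>X ` set_pmf p. \<Sum>b\<in>Y ` set_pmf p.
      dprob p (\<lambda>w. X w = a \<and> Z w = c) * dprob p (\<lambda>w. Y w = b \<and> Z w = c) / dprob p (\<lambda>w. Z w = c))
    = 1"
proof -
  have "(\<Sum>c\<in>Z ` set_pmf p. \<Sum>a\<in>X ` set_pmf p. \<Sum>b\<in>Y ` set_pmf p.
      dprob p (\<lambda>w. X w = a \<and> Z w = c) * dprob p (\<lambda>w. Y w = b \<and> Z w = c) / dprob p (\<lambda>w. Z w = c))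
    = (\<Sum>c\<in>Z ` set_pmf p. (\<Sum>a\<in>X ` set_pmf p. dprob p (\<lambda>w. X w = a \<and> Z w = c))
        * (\<Sum>b\<in>Y ` set_pmf p. dprob p (\<lambda>w. Y w = b \<and> Z w = c)) / dprob p (\<lambda>w. Z w = c))"
    by (simp add: sum_product sum_divide_distrib)
  also have "\<dots> = (\<Sum>c\<in>Z ` set_pmf p. dprob p (\<lambda>w. Z w = c))"
    using sum_dprob_partition[of X p "\<lambda>w. Z w = _"] sum_dprob_partition[of Y p "\<lambda>w. Z w = _"] fin
    by simp
  also have "\<dots> = 1"
    using sum_dprob_partition[of Z p "\<lambda>_. True"] fin by (simp add: dprob_True)
  finally show ?thesis .
qed

lemma cond_mutual_info_pos:
  assumes fin: "finite (set_pmf p)"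
    and excl: "dprob p (\<lambda>w. X w = x \<and> Y w = y \<and> Z w = z) = 0"
    and pos_xz: "0 < dprob p (\<lambda>w. X w = x \<and> Z w = z)"
    and pos_yz: "0 < dprob p (\<lambda>w. Y w = y \<and> Z w = z)"
  shows "0 < cond_mutual_info p X Y Z"
proof -
  let ?S = "X ` set_pmf p \<times> Y ` set_pmf p \<times> Z ` set_pmf p"
  define pz where "pz c = dprob p (\<lambda>w. Z w = c)" for c
  define pxz where "pxz a c = dprob p (\<lambda>w. X w = a \<and> Z w = c)" for a c
  define pyz where "pyz b c = dprob p (\<lambda>w. Y w = b \<and> Z w = c)" for b c
  define q where "q s = dprob p (\<lambda>w. X w = fst s \<and> Y w = fst (snd s) \<and> Z w = snd (snd s))" for s
  define r where "r s = pxz (fst s) (snd (snd s)) * pyz (fst (snd s)) (snd (snd s)) / pz (snd (snd s))"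
    for s
  have "(x, y, z) \<in> ?S"
    using pos_xz pos_yz unfolding dprob_pos_iff by blast
  have "sum q ?S = 1"
    using sum_dprob_partition[of Z p "\<lambda>w. X w = _ \<and> Y w = _"] sum_dprob_partition[of Y p "\<lambda>w. X w = _"]
      sum_dprob_partition[of X p "\<lambda>_. True"] fin
    by (simp add: q_def sum.cartesian_product' conj_commute conj_left_commute dprob_True)
  have "sum r ?S = (\<Sum>c\<in>Z ` set_pmf p. \<Sum>a\<in>X ` set_pmf p. \<Sum>b\<in>Y ` set_pmf p. r (a, b, c))"
    by (simp add: sum.cartesian_product' sum.swap[where A = "Y ` set_pmf p" and B = "Z ` set_pmf p"]
        sum.swap[where A = "X ` set_pmf p" and B = "Z ` set_pmf p"])
  also have "\<dots> = 1"
    using sum_cond_product_dprob[OF fin] by (simp add: r_def pxz_def pyz_def pz_def)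
  finally have "sum r ?S = 1" .
  moreover have "0 < r s" if "0 < q s" for s
  proof -
    have "q s \<le> pxz (fst s) (snd (snd s))" "q s \<le> pyz (fst (snd s)) (snd (snd s))"
      "q s \<le> pz (snd (snd s))"
      by (auto simp: q_def pxz_def pyz_def pz_def intro!: dprob_mono)
    with \<open>0 < q s\<close> show ?thesis
      by (simp add: r_def)
  qed
  moreover have "q (x, y, z) \<noteq> r (x, y, z)"
  proof -
    have "pyz y z \<le> pz z"
      unfolding pyz_def pz_def by (rule dprob_mono) simp
    with excl pos_xz pos_yz show ?thesis
      by (simp add: q_def r_def pxz_def pyz_def)
  qed
  ultimately have "0 < (\<Sum>s\<in>?S. if q s = 0 then 0 else q s * log 2 (q s / r s))"
    using fin \<open>(x, y, z) \<in> ?S\<close> \<open>sum q ?S = 1\<close>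
    by (intro gibbs_inequality_strict[where t = "(x, y, z)"])
       (auto simp: q_def r_def pxz_def pyz_def pz_def dprob_nonneg)
  also have "\<dots> = cond_mutual_info p X Y Z"
    by (simp add: cond_mutual_info_def Let_def q_def r_def pxz_def pyz_def pz_def
        sum.cartesian_product' mult.commute cong: if_cong)
  finally show ?thesis .
qed

lemma inj_on_add_mod: "inj_on (\<lambda>b. (b + t) mod n) {0..<(n::nat)}"
proof (rule inj_onI)
  fix x y
  assume "x \<in> {0..<n}" "y \<in> {0..<n}" and eq: "(x + t) mod n = (y + t) mod n"
  from eq have "x mod n = y mod n"
    by (simp add: nat_mod_eq_iff)
  with \<open>x \<in> {0..<n}\<close> \<open>y \<in> {0..<n}\<close> show "x = y"
    by simp
qed

lemma pmf_of_set_Times: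
  assumes "finite A" "A \<noteq> {}" "finite B" "B \<noteq> {}"
  shows "pmf_of_set (A \<times> B) = pair_pmf (pmf_of_set A) (pmf_of_set B)"
  by (rule pmf_eqI) (auto simp: assms pmf_pair indicator_def card_cartesian_product)

lemma map_pmf_sum_mod_uniform:
  fixes n :: nat
  defines "U \<equiv> {0..<n}"
  assumes "0 < n"
  shows "map_pmf (\<lambda>(a, b, c, d). (a, (a + b + c + d) mod n)) (pmf_of_set (U \<times> U \<times> U \<times> U))
    = pair_pmf (pmf_of_set U) (pmf_of_set U)"
proof -
  let ?\<Omega> = "U \<times> U \<times> U \<times> U"
  \<comment> \<open>For fixed a, c, d the map b \<mapsto> (a + b + c + d) mod n permutes U, so \<phi> permutes the box.\<close>
  define \<phi> where "\<phi> = (\<lambda>(a, b, c, d). (a, (a + b + c + d) mod n, c, d))"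
  have fin: "finite U" "U \<noteq> {}"
    using \<open>0 < n\<close> by (auto simp: U_def)
  have "b = b'" if "b \<in> U" "b' \<in> U" "(a + b + c + d) mod n = (a + b' + c + d) mod n"
    for a b b' c d
    using inj_onD[OF inj_on_add_mod[of "a + c + d" n] _ that(1,2)[unfolded U_def]] that(3)
    by (simp add: ac_simps)
  then have "inj_on \<phi> ?\<Omega>"
    by (auto simp: inj_on_def \<phi>_def)
  moreover have "\<phi> ` ?\<Omega> \<subseteq> ?\<Omega>"
    using \<open>0 < n\<close> by (auto simp: \<phi>_def U_def)
  ultimately have \<phi>_preserving: "map_pmf \<phi> (pmf_of_set ?\<Omega>) = pmf_of_set ?\<Omega>"
    using fin by (simp add: map_pmf_of_set_inj endo_inj_surj)
  have "map_pmf (\<lambda>(a, b, c, d). (a, (a + b + c + d) mod n)) (pmf_of_set ?\<Omega>)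
      = map_pmf (\<lambda>(a, r). (a, fst r)) (map_pmf \<phi> (pmf_of_set ?\<Omega>))"
    by (simp add: map_pmf_comp \<phi>_def case_prod_unfold)
  also have "\<dots> = map_pmf (\<lambda>(a, r). (a, fst r)) (pmf_of_set ?\<Omega>)"
    by (simp only: \<phi>_preserving)
  also have "\<dots> = pair_pmf (pmf_of_set U) (pmf_of_set U)"
    using fin map_pair[of "\<lambda>a. a" fst "pmf_of_set U" "pmf_of_set (U \<times> U \<times> U)"]
    by (simp add: pmf_of_set_Times map_fst_pair_pmf)
  finally show ?thesis .
qed

lemma div_mod_eq_mod_mult_div: "(x::nat) div k mod M = x mod (k * M) div k"
  by (cases "k = 0") (simp_all add: mod_mult2_eq)

lemma div_mod_eq_mod_div:
  fixes e k M m :: nat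
  assumes "k * M dvd m"
  shows "e div k mod M = e mod m div k mod M"
  using assms by (simp add: div_mod_eq_mod_mult_div mod_mod_cancel)

lemma digit_eq_iff_bounds:
  fixes x k y M :: nat
  assumes "0 < k" "x < M * k"
  shows "x div k mod M = y \<longleftrightarrow> y * k \<le> x \<and> x < Suc y * k"
proof -
  have "x div k < M"
    using assms by (simp add: div_less_iff_less_mult)
  then have "x div k mod M = x div k"
    by simp
  also have "x div k = y \<longleftrightarrow> y \<le> x div k \<and> x div k < Suc y"
    by linarith
  finally show ?thesis
    using assms by (simp add: less_eq_div_iff_mult_less_eq div_less_iff_less_mult)
qed

lemma mod_add_le: "(a + b) mod m \<le> a mod m + (b::nat) mod m"
  by (metis mod_add_eq mod_less_eq_dividend)

lemma digit_le_digit_add_no_carry: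
  fixes a b k M :: nat
  assumes "a mod (k * M) + b mod (k * M) < k * M"
  shows "a div k mod M \<le> (a + b) div k mod M"
proof -
  have "(a + b) mod (k * M) = a mod (k * M) + b mod (k * M)"
    using assms by (metis mod_add_eq mod_less)
  then show ?thesis
    unfolding div_mod_eq_mod_mult_div by (simp add: div_le_mono)
qed

lemma set_pmf_abcd:
  "set_pmf abcd = {0..<1000} \<times> {0..<1000} \<times> {0..<1000} \<times> {0..<1000}"
  by (simp add: abcd_def)

lemma finite_set_pmf_abcd: "finite (set_pmf abcd)"
  by (simp add: set_pmf_abcd)

lemma digit_e_eq_low_digit:
  assumes "j \<noteq> 0"
  shows "digit_e j w = var_e w mod 1000 div 10 ^ (3 - j) mod 10"
proof -
  have "10 ^ (3 - j) * 10 dvd (10 ^ 3 :: nat)"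
    unfolding power_Suc2[symmetric] using assms by (intro le_imp_power_dvd) simp
  then show ?thesis
    using assms div_mod_eq_mod_div by (simp add: digit_e_def)
qed

lemma mutual_info_digit_a_digit_e_eq_0:
  assumes "j \<noteq> 0"
  shows "mutual_info abcd (digit_a i) (digit_e j) = 0"
proof -
  let ?U = "pmf_of_set {0..<1000::nat}"
  define f where "f x = x div 10 ^ (3 - i) mod 10" for x :: nat
  define g where "g y = y div 10 ^ (3 - j) mod 10" for y :: nat
  have "(\<lambda>w. (var_a w, var_e w mod 1000)) = (\<lambda>(a, b, c, d). (a, (a + b + c + d) mod 1000))"
    by (auto simp: var_a_def var_e_def)
  then have uniform: "map_pmf (\<lambda>w. (var_a w, var_e w mod 1000)) abcd = pair_pmf ?U ?U"
    using map_pmf_sum_mod_uniform[of 1000] by (simp add: abcd_def)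
  have "map_pmf (\<lambda>w. (digit_a i w, digit_e j w)) abcd
      = map_pmf (\<lambda>(x, y). (f x, g y)) (map_pmf (\<lambda>w. (var_a w, var_e w mod 1000)) abcd)"
    by (simp add: map_pmf_comp digit_a_def digit_e_eq_low_digit[OF assms] f_def g_def)
  also have "\<dots> = pair_pmf (map_pmf f ?U) (map_pmf g ?U)"
    by (simp only: uniform map_pair)
  finally show ?thesis
    by (rule mutual_info_eq_0_if_pair_pmf)
qed

lemma digit_a_le_digit_e_if_no_carry:
  assumes "1 \<le> i" "i \<le> 3" "carry i w = 0"
  shows "digit_a i w \<le> digit_e i w"
proof -
  obtain a b c d where w: "w = (a, b, c, d)"
    by (cases w) auto
  define k :: nat where "k = 10 ^ (3 - i)"
  have "10 ^ (4 - i) = k * 10"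
    using assms(2) by (simp add: k_def flip: power_Suc2 Suc_diff_le)
  moreover have "0 < k"
    by (simp add: k_def)
  ultimately have "a mod (k * 10) + b mod (k * 10) + c mod (k * 10) + d mod (k * 10) < k * 10"
    using assms(3) by (simp add: carry_def w div_eq_0_iff)
  moreover have "(b + c + d) mod (k * 10) \<le> b mod (k * 10) + c mod (k * 10) + d mod (k * 10)"
    using mod_add_le[of "b + c" d "k * 10"] mod_add_le[of b c "k * 10"] by linarith
  ultimately have "a div k mod 10 \<le> (a + (b + c + d)) div k mod 10"
    by (intro digit_le_digit_add_no_carry) linarith
  then show ?thesis
    using assms(1) by (simp add: digit_a_def digit_e_def var_a_def var_e_def w k_def add.assoc)
qed

lemma cond_mutual_info_digit_carry_pos:
  assumes "i \<in> {1, 2, 3}"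
  shows "0 < cond_mutual_info abcd (digit_a i) (digit_e i) (carry i)"
proof (rule cond_mutual_info_pos[OF finite_set_pmf_abcd, where x = 9 and y = 0 and z = 0])
  have "\<not> (digit_a i w = 9 \<and> digit_e i w = 0 \<and> carry i w = 0)" for w
    using assms digit_a_le_digit_e_if_no_carry[of i w] by auto
  then show "dprob abcd (\<lambda>w. digit_a i w = 9 \<and> digit_e i w = 0 \<and> carry i w = 0) = 0"
    by (simp add: dprob_eq_0_iff)
  have "(9 * 10 ^ (3 - i), 0, 0, 0) \<in> set_pmf abcd"
    using assms by (auto simp: set_pmf_abcd)
  then show "0 < dprob abcd (\<lambda>w. digit_a i w = 9 \<and> carry i w = 0)"
    using assms unfolding dprob_pos_iff
    by (intro bexI[of _ "(9 * 10 ^ (3 - i), 0, 0, 0)"]) (auto simp: digit_a_def var_a_def carry_def)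
  show "0 < dprob abcd (\<lambda>w. digit_e i w = 0 \<and> carry i w = 0)"
    unfolding dprob_pos_iff
    by (intro bexI[of _ "(0, 0, 0, 0)"]) (auto simp: set_pmf_abcd digit_e_def var_e_def carry_def)
qed

lemma digit_a1_digit_e0_shift:
  fixes shift :: "nat \<times> nat \<times> nat \<times> nat \<Rightarrow> nat \<times> nat \<times> nat \<times> nat"
  defines "shift \<equiv> \<lambda>(a, b, c, d). (a + 900, b, c, d)"
  shows "shift ` {w \<in> set_pmf abcd. digit_a 1 w = 0} = {w \<in> set_pmf abcd. digit_a 1 w = 9}"
    and "shift ` {w \<in> set_pmf abcd. digit_a 1 w = 0 \<and> digit_e 0 w = 3}
      \<subset> {w \<in> set_pmf abcd. digit_a 1 w = 9 \<and> digit_e 0 w = 3}"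
proof -
  have a1: "digit_a 1 (a, b, c, d) = 0 \<longleftrightarrow> a < 100"
    and a9: "digit_a 1 (a, b, c, d) = 9 \<longleftrightarrow> 900 \<le> a"
    and e3: "digit_e 0 (a, b, c, d) = 3 \<longleftrightarrow> 3000 \<le> a + b + c + d"
    if "(a, b, c, d) \<in> set_pmf abcd" for a b c d
    using that digit_eq_iff_bounds[of 100 a 10 0] digit_eq_iff_bounds[of 100 a 10 9]
    by (auto simp: set_pmf_abcd digit_a_def digit_e_def var_a_def var_e_def
        div_nat_eqI less_eq_div_iff_mult_less_eq div_less_iff_less_mult)
  show "shift ` {w \<in> set_pmf abcd. digit_a 1 w = 0} = {w \<in> set_pmf abcd. digit_a 1 w = 9}"
  proof (intro equalityI subsetI)
    fix v assume "v \<in> shift ` {w \<in> set_pmf abcd. digit_a 1 w = 0}"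
    then show "v \<in> {w \<in> set_pmf abcd. digit_a 1 w = 9}"
      using a1 a9 by (auto simp: shift_def set_pmf_abcd)
  next
    fix v assume "v \<in> {w \<in> set_pmf abcd. digit_a 1 w = 9}"
    then obtain a b c d where "v = (a, b, c, d)" "(a, b, c, d) \<in> set_pmf abcd" "900 \<le> a"
      using a9 by (cases v) auto
    moreover have "(a - 900, b, c, d) \<in> {w \<in> set_pmf abcd. digit_a 1 w = 0}"
      using calculation a1 by (auto simp: set_pmf_abcd)
    ultimately show "v \<in> shift ` {w \<in> set_pmf abcd. digit_a 1 w = 0}"
      by (force simp: shift_def)
  qed
  have "shift ` {w \<in> set_pmf abcd. digit_a 1 w = 0 \<and> digit_e 0 w = 3}
      \<subseteq> {w \<in> set_pmf abcd. digit_a 1 w = 9 \<and> digit_e 0 w = 3}"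
    using a1 a9 e3 by (auto simp: shift_def set_pmf_abcd)
  moreover have "(900, 999, 999, 999) \<in> {w \<in> set_pmf abcd. digit_a 1 w = 9 \<and> digit_e 0 w = 3}"
    by (simp add: set_pmf_abcd digit_a_def digit_e_def var_a_def var_e_def)
  moreover have "(900, 999, 999, 999) \<notin> shift ` {w \<in> set_pmf abcd. digit_a 1 w = 0 \<and> digit_e 0 w = 3}"
    using e3 by (auto simp: shift_def)
  ultimately show "shift ` {w \<in> set_pmf abcd. digit_a 1 w = 0 \<and> digit_e 0 w = 3}
      \<subset> {w \<in> set_pmf abcd. digit_a 1 w = 9 \<and> digit_e 0 w = 3}"
    by blast
qed

lemma dprob_digit_a1_digit_e0:
  shows "dprob abcd (\<lambda>w. digit_a 1 w = 0) = dprob abcd (\<lambda>w. digit_a 1 w = 9)"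
    and "dprob abcd (\<lambda>w. digit_a 1 w = 0 \<and> digit_e 0 w = 3)
      < dprob abcd (\<lambda>w. digit_a 1 w = 9 \<and> digit_e 0 w = 3)"
proof -
  let ?\<Omega> = "set_pmf abcd"
  let ?shift = "\<lambda>(a::nat, b::nat, c::nat, d::nat). (a + 900, b, c, d)"
  have fin: "finite ?\<Omega>" "?\<Omega> \<noteq> {}"
    by (simp_all add: set_pmf_abcd)
  have uniform: "dprob abcd P = card {w \<in> ?\<Omega>. P w} / card ?\<Omega>" for P
    unfolding set_pmf_abcd unfolding abcd_def by (rule dprob_pmf_of_set) simp_all
  have "inj ?shift"
    unfolding inj_def by clarsimp
  then have card_shift: "card (?shift ` A) = card A" for A
    by (simp add: card_image inj_on_subset)
  have "card {w \<in> ?\<Omega>. digit_a 1 w = 0} = card {w \<in> ?\<Omega>. digit_a 1 w = 9}"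
    using card_shift[of "{w \<in> ?\<Omega>. digit_a 1 w = 0}"] digit_a1_digit_e0_shift(1)
    by simp
  moreover have "card {w \<in> ?\<Omega>. digit_a 1 w = 0 \<and> digit_e 0 w = 3}
      < card {w \<in> ?\<Omega>. digit_a 1 w = 9 \<and> digit_e 0 w = 3}"
    using psubset_card_mono[OF _ digit_a1_digit_e0_shift(2)] card_shift fin
    by simp
  ultimately show "dprob abcd (\<lambda>w. digit_a 1 w = 0) = dprob abcd (\<lambda>w. digit_a 1 w = 9)"
    and "dprob abcd (\<lambda>w. digit_a 1 w = 0 \<and> digit_e 0 w = 3)
      < dprob abcd (\<lambda>w. digit_a 1 w = 9 \<and> digit_e 0 w = 3)"
    using fin by (simp_all add: uniform divide_strict_right_mono card_gt_0_iff)
qed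

lemma mutual_info_digit_a1_digit_e0_pos: "0 < mutual_info abcd (digit_a 1) (digit_e 0)"
proof (cases "dprob abcd (\<lambda>w. digit_a 1 w = 0 \<and> digit_e 0 w = 3)
    = dprob abcd (\<lambda>w. digit_a 1 w = 0) * dprob abcd (\<lambda>w. digit_e 0 w = 3)")
  case True
  with dprob_digit_a1_digit_e0
  have "dprob abcd (\<lambda>w. digit_a 1 w = 9 \<and> digit_e 0 w = 3)
    \<noteq> dprob abcd (\<lambda>w. digit_a 1 w = 9) * dprob abcd (\<lambda>w. digit_e 0 w = 3)"
    by simp
  then show ?thesis
    by (rule mutual_info_pos[OF finite_set_pmf_abcd])
next
  case False
  then show ?thesis
    by (rule mutual_info_pos[OF finite_set_pmf_abcd])
qed

theorem theorem1:
  shows "mutual_info abcd (digit_a 1) (digit_e 0) > 0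
    \<and> (\<forall>i\<in>{1,2,3}. \<forall>j\<in>{1,2,3}. mutual_info abcd (digit_a i) (digit_e j) = 0)
    \<and> (\<forall>i\<in>{1,2,3}. cond_mutual_info abcd (digit_a i) (digit_e i) (carry i) > 0)"
  using mutual_info_digit_a1_digit_e0_pos mutual_info_digit_a_digit_e_eq_0
    cond_mutual_info_digit_carry_pos
  by auto

end
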